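(* Suppose that $2\le n_0<\infty$ and that $S$ is submultiplicative on $[1,n_0]$. Then for every $\varepsilon>0$ and every $N_0>n_0$ there exists an extension of $S$ to $[1,N_0]$ which is submultiplicative on $[1,N_0]$ and satisfies $S(N_0)<S(n_0)+\varepsilon$.
   Context: Let $2\le n_0\le\infty$ and let $S$ be a real-valued function on $[1,n_0]$ (on $[1,\infty)$ if $n_0=\infty$). $S$ is called submultiplicative on $[1,n_0]$ if: (a) $S$ is piecewise-linear, continuous, strictly increasing and concave; (b) $S(x)=x$ for $1\le x\le 2$; (c) $S(xy)\le S(x)S(y)$ for all $x,y$ with $1\le x,y,xy\le n_0$. *)

theory Defs
  imports "HOL-Analysis.Analysis"
begin

definition piecewise_linear_on :: "real \<Rightarrow> real \<Rightarrow> (real \<Rightarrow> real) \<Rightarrow> bool" where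
  "piecewise_linear_on a b f \<longleftrightarrow>
     (\<exists>P. finite P \<and> a \<in> P \<and> b \<in> P \<and> P \<subseteq> {a..b} \<and>
        (\<forall>x\<in>P. \<forall>y\<in>P. x < y \<and> {x<..<y} \<inter> P = {} \<longrightarrow>
            (\<exists>m c. \<forall>t\<in>{x..y}. f t = m * t + c)))"

definition submultiplicative_on :: "real \<Rightarrow> (real \<Rightarrow> real) \<Rightarrow> bool" where
  "submultiplicative_on n0 S \<longleftrightarrow>
     piecewise_linear_on 1 n0 S \<and>
     continuous_on {1..n0} S \<and>
     strict_mono_on {1..n0} S \<and>
     concave_on {1..n0} S \<and>
     (\<forall>x\<in>{1..2}. S x = x) \<and>
     (\<forall>x y. 1 \<le> x \<longrightarrow> 1 \<le> y \<longrightarrow> x * y \<le> n0 \<longrightarrow> S (x * y) \<le> S x * S y)"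

end

theory Submission
  imports Defs
begin

(* Extend S beyond n0 by the line of slope d through (n0, S n0). As S is concave and piecewise
   linear, all its difference quotients are at least the slope m > 0 of its last linear piece.
   If d N0 <= m the extension stays concave, and submultiplicativity for products beyond n0
   reduces to this slope bound: if one factor b exceeds n0, then T (a b) - T b = d b (a - 1) is
   at most T a - 1; if both factors are at most n0, compare with S n0 <= S (n0 / y) S y.
   Choosing d (N0 - n0) < eps bounds T N0. *)

lemma concave_on_three_pointsD:
  fixes f :: "real \<Rightarrow> real"
  assumes "concave_on I f" "x \<in> I" "y \<in> I" "x \<le> z" "z \<le> y"
  shows "f x * (y - z) + f y * (z - x) \<le> f z * (y - x)"
proof (cases "x = y")
  case False
  define t where "t = (z - x) / (y - x)"
  have t: "0 \<le> t" "t \<le> 1" and zx: "z - x = t * (y - x)"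
    using assms False by (auto simp: t_def field_simps)
  have "(1 - t) *\<^sub>R x + t *\<^sub>R y = z"
    using zx by (simp add: algebra_simps)
  then have "(1 - t) * f x + t * f y \<le> f z"
    using concave_onD[OF assms(1) t assms(2,3)] by simp
  then have le: "((1 - t) * f x + t * f y) * (y - x) \<le> f z * (y - x)"
    using assms by (intro mult_right_mono) auto
  have yz: "y - z = (1 - t) * (y - x)"
    using zx by (simp add: algebra_simps)
  have "f x * (y - z) + f y * (z - x) = ((1 - t) * f x + t * f y) * (y - x)"
    unfolding yz zx by (simp add: algebra_simps)
  with le show ?thesis
    by simp
qed (use assms in auto)

lemma concave_on_Icc_three_pointsI:
  fixes f :: "real \<Rightarrow> real"
  assumes "\<And>x z y. a \<le> x \<Longrightarrow> x < z \<Longrightarrow> z < y \<Longrightarrow> y \<le> b \<Longrightarrow>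
             f x * (y - z) + f y * (z - x) \<le> f z * (y - x)"
  shows "concave_on {a..b} f"
proof (rule concave_on_linorderI)
  fix t x y :: real
  assume t: "0 < t" "t < 1" and xy: "x \<in> {a..b}" "y \<in> {a..b}" "x < y"
  define z where "z = (1 - t) * x + t * y"
  have zx: "z - x = t * (y - x)" and yz: "y - z = (1 - t) * (y - x)"
    by (simp_all add: z_def algebra_simps)
  have "x < z" "z < y"
    using zx yz t xy by (smt (verit) mult_pos_pos)+
  then have "f x * (y - z) + f y * (z - x) \<le> f z * (y - x)"
    using assms xy by simp
  then have "((1 - t) * f x + t * f y) * (y - x) \<le> f z * (y - x)"
    unfolding zx yz by (simp add: algebra_simps)
  then have "(1 - t) * f x + t * f y \<le> f z"
    using xy by (simp add: mult_le_cancel_right)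
  then show "(1 - t) * f x + t * f y \<le> f ((1 - t) *\<^sub>R x + t *\<^sub>R y)"
    by (simp add: z_def)
qed (rule convex_real_interval)

lemma piecewise_linear_on_last_piece:
  assumes "piecewise_linear_on a b f" "a < b"
  obtains p m c where "a \<le> p" "p < b" "\<forall>t\<in>{p..b}. f t = m * t + c"
proof -
  obtain P where P: "finite P" "a \<in> P" "b \<in> P" "P \<subseteq> {a..b}"
    and affine: "\<forall>x\<in>P. \<forall>y\<in>P. x < y \<and> {x<..<y} \<inter> P = {} \<longrightarrow> (\<exists>m c. \<forall>t\<in>{x..y}. f t = m * t + c)"
    using assms(1) unfolding piecewise_linear_on_def by blast
  define p where "p = Max {q \<in> P. q < b}"
  have "p \<in> {q \<in> P. q < b}"
    unfolding p_def using P assms(2) by (intro Max_in) auto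
  then have "p \<in> P" "a \<le> p" "p < b"
    using P(4) by auto
  moreover have "{p<..<b} \<inter> P = {}"
    using Max_ge[of "{q \<in> P. q < b}"] P(1) by (fastforce simp: p_def)
  ultimately show ?thesis
    using affine P(3) that by blast
qed

lemma concave_on_le_last_piece:
  fixes f :: "real \<Rightarrow> real"
  assumes "concave_on {a..b} f" "a \<le> p" "p < b" "\<forall>t\<in>{p..b}. f t = m * t + c"
    and "a \<le> x" "x \<le> b"
  shows "f x \<le> m * x + c"
proof (cases "p \<le> x")
  case False
  have "f x * (b - p) + f b * (p - x) \<le> f p * (b - x)"
    using concave_on_three_pointsD[OF assms(1), of x b p] assms False by auto
  moreover have "f p = m * p + c" "f b = m * b + c"
    using assms by auto
  ultimately have "f x * (b - p) \<le> (m * x + c) * (b - p)"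
    by (simp add: algebra_simps)
  then show ?thesis
    using assms(3) by (simp add: mult_le_cancel_right)
qed (use assms in auto)

lemma concave_on_slope_ge_last_piece:
  fixes f :: "real \<Rightarrow> real"
  assumes "concave_on {a..b} f" "a \<le> p" "p < b" "\<forall>t\<in>{p..b}. f t = m * t + c"
    and "a \<le> x" "x \<le> y" "y \<le> b"
  shows "m * (y - x) \<le> f y - f x"
proof (cases "x = b")
  case False
  have "f x * (b - y) + f b * (y - x) \<le> f y * (b - x)"
    using concave_on_three_pointsD[OF assms(1), of x b y] assms by auto
  moreover have "m * (b - x) \<le> f b - f x"
    using concave_on_le_last_piece[OF assms(1-4), of x] assms by (simp add: algebra_simps)
  then have "m * (b - x) * (y - x) \<le> (f b - f x) * (y - x)"
    using assms by (intro mult_right_mono) auto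
  moreover have "(f y - f x) * (b - x) - (f b - f x) * (y - x) = f y * (b - x) - (f x * (b - y) + f b * (y - x))"
    by (simp add: algebra_simps)
  ultimately have "m * (b - x) * (y - x) \<le> (f y - f x) * (b - x)"
    by linarith
  then show ?thesis
    using assms False by (simp add: mult.commute[of "y - x"] mult_le_cancel_right)
qed (use assms in simp)

lemma submultiplicative_on_slope_bound:
  assumes "submultiplicative_on n0 S" "1 < n0"
  obtains m where "0 < m" "\<And>x y. 1 \<le> x \<Longrightarrow> x \<le> y \<Longrightarrow> y \<le> n0 \<Longrightarrow> m * (y - x) \<le> S y - S x"
proof -
  have pl: "piecewise_linear_on 1 n0 S" and mono: "strict_mono_on {1..n0} S"
    and concave: "concave_on {1..n0} S"
    using assms(1) unfolding submultiplicative_on_def by auto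
  obtain p m c where p: "1 \<le> p" "p < n0" and last: "\<forall>t\<in>{p..n0}. S t = m * t + c"
    using pl assms(2) by (rule piecewise_linear_on_last_piece)
  have "S p < S n0"
    using p by (intro strict_mono_onD[OF mono]) auto
  moreover have "S n0 - S p = m * (n0 - p)"
    using last p by (simp add: algebra_simps)
  ultimately have "0 < m * (n0 - p)"
    by linarith
  then have "0 < m"
    using p by (simp add: zero_less_mult_iff)
  then show thesis
    by (rule that[OF _ concave_on_slope_ge_last_piece[OF concave p last]])
qed

lemma submultiplicative_on_ge_one:
  assumes "submultiplicative_on n0 S" "1 \<le> x" "x \<le> n0"
  shows "1 \<le> S x"
proof -
  have "S 1 = 1" "strict_mono_on {1..n0} S"
    using assms(1) unfolding submultiplicative_on_def by auto
  then show ?thesis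
    using assms strict_mono_onD[of "{1..n0}" S 1 x] by (cases "x = 1") auto
qed

lemma submultiplicative_on_mult_ge_endpoint:
  assumes S: "submultiplicative_on n0 S" and "0 \<le> m"
    and slope: "\<And>x y. 1 \<le> x \<Longrightarrow> x \<le> y \<Longrightarrow> y \<le> n0 \<Longrightarrow> m * (y - x) \<le> S y - S x"
    and x: "1 \<le> x" "x \<le> n0" and y: "1 \<le> y" "y \<le> n0" and "n0 \<le> x * y"
  shows "S n0 + m * (x - n0 / y) \<le> S x * S y"
proof -
  define x' where "x' = n0 / y"
  have x': "1 \<le> x'" "x' \<le> x" "x' * y = n0"
    using x y \<open>n0 \<le> x * y\<close> by (auto simp: x'_def field_simps)
  have "S n0 \<le> S x' * S y"
    using S x' y unfolding submultiplicative_on_def by (metis order.refl)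
  then have "S n0 + m * (x - x') \<le> S x' * S y + m * (x - x')"
    by simp
  also have "\<dots> \<le> S x' * S y + m * (x - x') * S y"
    using mult_left_mono[OF submultiplicative_on_ge_one[OF S y], of "m * (x - x')"] x' \<open>0 \<le> m\<close>
    by simp
  also have "\<dots> = (S x' + m * (x - x')) * S y"
    by (simp add: algebra_simps)
  also have "\<dots> \<le> S x * S y"
    using slope[of x' x] x' x submultiplicative_on_ge_one[OF S y] by (intro mult_right_mono) auto
  finally show ?thesis
    by (simp add: x'_def)
qed

definition affine_extension :: "real \<Rightarrow> real \<Rightarrow> (real \<Rightarrow> real) \<Rightarrow> real \<Rightarrow> real" where
  "affine_extension b d f t = (if t \<le> b then f t else f b + d * (t - b))"

lemma affine_extension_le [simp]: "t \<le> b \<Longrightarrow> affine_extension b d f t = f t"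
  by (simp add: affine_extension_def)

lemma affine_extension_ge: "b \<le> t \<Longrightarrow> affine_extension b d f t = f b + d * (t - b)"
  by (simp add: affine_extension_def)

lemma piecewise_linear_on_affine_extension:
  assumes "piecewise_linear_on a b f" "b \<le> c"
  shows "piecewise_linear_on a c (affine_extension b d f)"
proof -
  obtain P where P: "finite P" "a \<in> P" "b \<in> P" "P \<subseteq> {a..b}"
    and affine: "\<forall>x\<in>P. \<forall>y\<in>P. x < y \<and> {x<..<y} \<inter> P = {} \<longrightarrow> (\<exists>m c. \<forall>t\<in>{x..y}. f t = m * t + c)"
    using assms(1) unfolding piecewise_linear_on_def by blast
  show ?thesis
    unfolding piecewise_linear_on_def
  proof (intro exI[of _ "insert c P"] conjI ballI impI)
    show "finite (insert c P)" "a \<in> insert c P" "c \<in> insert c P" "insert c P \<subseteq> {a..c}"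
      using P assms(2) by auto
    fix x y assume x: "x \<in> insert c P" and y: "y \<in> insert c P"
      and xy: "x < y \<and> {x<..<y} \<inter> insert c P = {}"
    show "\<exists>m c. \<forall>t\<in>{x..y}. affine_extension b d f t = m * t + c"
    proof (cases "y \<le> b")
      case True
      then have "x \<in> P" "y \<in> P" "{x<..<y} \<inter> P = {}"
        using x y xy assms(2) P(3) by auto
      then obtain m' c' where "\<forall>t\<in>{x..y}. f t = m' * t + c'"
        using affine xy by blast
      then show ?thesis
        using True by auto
    next
      case False
      have "b \<le> x"
      proof (rule ccontr)
        assume "\<not> b \<le> x"
        then have "b \<in> {x<..<y} \<inter> insert c P"
          using False P(3) by auto
        then show False
          using xy by blast
      qed
      then have "\<forall>t\<in>{x..y}. affine_extension b d f t = d * t + (f b - d * b)"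
        by (simp add: affine_extension_ge algebra_simps)
      then show ?thesis
        by blast
    qed
  qed
qed

lemma continuous_on_affine_extension:
  assumes "continuous_on {a..b} f"
  shows "continuous_on {a..c} (affine_extension b d f)"
  unfolding affine_extension_def
  by (rule continuous_on_cases_le[where h = "\<lambda>t. t"])
     (auto intro!: continuous_intros intro: continuous_on_subset[OF assms])

lemma strict_mono_on_affine_extension:
  assumes "strict_mono_on {a..b} f" "0 < d"
  shows "strict_mono_on {a..c} (affine_extension b d f)"
proof (rule strict_mono_onI)
  fix r s assume r: "r \<in> {a..c}" and s: "s \<in> {a..c}" and "r < s"
  consider "s \<le> b" | "b \<le> r" | "r < b" "b < s"
    by linarith
  then show "affine_extension b d f r < affine_extension b d f s"
  proof cases
    case 1
    then show ?thesis
      using r s \<open>r < s\<close> strict_mono_onD[OF assms(1), of r s] by auto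
  next
    case 2
    then show ?thesis
      using assms(2) \<open>r < s\<close> by (simp add: affine_extension_ge)
  next
    case 3
    have "f r < f b"
      using 3 r strict_mono_onD[OF assms(1), of r b] by auto
    moreover have "0 < d * (s - b)"
      using 3 assms(2) by simp
    ultimately have "f r < f b + d * (s - b)"
      by linarith
    then show ?thesis
      using 3 by (simp add: affine_extension_ge)
  qed
qed

lemma concave_on_affine_extension:
  fixes f :: "real \<Rightarrow> real"
  assumes concave: "concave_on {a..b} f"
    and slope: "\<And>x. a \<le> x \<Longrightarrow> x \<le> b \<Longrightarrow> d * (b - x) \<le> f b - f x"
  shows "concave_on {a..c} (affine_extension b d f)"
proof (rule concave_on_Icc_three_pointsI)
  let ?T = "affine_extension b d f"
  define L where "L t = f b + d * (t - b)" for t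
  have T_le_L: "?T t \<le> L t" if "a \<le> t" for t
    using slope[of t] that by (cases "t \<le> b") (auto simp: L_def affine_extension_ge algebra_simps)
  have chord_L: "?T x * (y - z) + L y * (z - x) \<le> L z * (y - x)" if "a \<le> x" "x \<le> z" "z \<le> y" for x z y
  proof -
    have "?T x * (y - z) \<le> L x * (y - z)"
      using T_le_L that by (intro mult_right_mono) auto
    moreover have "L x * (y - z) + L y * (z - x) = L z * (y - x)"
      by (simp add: L_def algebra_simps)
    ultimately show ?thesis
      by linarith
  qed
  fix x z y assume "a \<le> x" "x < z" "z < y" "y \<le> c"
  consider "y \<le> b" | "b \<le> z" | "z < b" "b < y"
    by linarith
  then show "?T x * (y - z) + ?T y * (z - x) \<le> ?T z * (y - x)"
  proof cases
    case 1
    then show ?thesis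
      using concave_on_three_pointsD[OF concave, of x y z] \<open>a \<le> x\<close> \<open>x < z\<close> \<open>z < y\<close> by simp
  next
    case 2
    then show ?thesis
      using chord_L[of x z y] \<open>a \<le> x\<close> \<open>x < z\<close> \<open>z < y\<close> by (simp add: L_def affine_extension_ge)
  next
    case 3
    \<comment> \<open>Combine concavity on [x, b] at z with the chord inequality of the linear part at b.\<close>
    have "(f x * (b - z) + f b * (z - x)) * (y - x) \<le> f z * (b - x) * (y - x)"
      using concave_on_three_pointsD[OF concave, of x b z] 3 \<open>a \<le> x\<close> \<open>x < z\<close>
      by (intro mult_right_mono) auto
    moreover have "(f x * (y - b) + L y * (b - x)) * (z - x) \<le> f b * (y - x) * (z - x)"
      using chord_L[of x b y] 3 \<open>a \<le> x\<close> \<open>x < z\<close> by (simp add: mult_right_mono L_def)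
    moreover have "(f x * (b - z) + f b * (z - x)) * (y - x) + (f x * (y - b) + L y * (b - x)) * (z - x)
        - f b * (y - x) * (z - x) = (f x * (y - z) + L y * (z - x)) * (b - x)"
      by (simp add: algebra_simps)
    moreover have "f z * (b - x) * (y - x) = f z * (y - x) * (b - x)"
      by (simp add: ac_simps)
    ultimately have "(f x * (y - z) + L y * (z - x)) * (b - x) \<le> f z * (y - x) * (b - x)"
      by linarith
    then show ?thesis
      using 3 \<open>x < z\<close> by (simp add: L_def affine_extension_ge mult_le_cancel_right)
  qed
qed

lemma affine_extension_mult_le_large_factor:
  assumes S: "submultiplicative_on n0 S" and n0: "2 \<le> n0"
    and slope: "\<And>x y. 1 \<le> x \<Longrightarrow> x \<le> y \<Longrightarrow> y \<le> n0 \<Longrightarrow> m * (y - x) \<le> S y - S x"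
    and d: "0 < d" "d * N0 \<le> m"
    and a: "1 \<le> a" and b: "n0 < b" and ab: "a * b \<le> N0"
  shows "affine_extension n0 d S (a * b) \<le> affine_extension n0 d S a * affine_extension n0 d S b"
proof -
  let ?T = "affine_extension n0 d S"
  have "b \<le> a * b"
    using a b n0 by simp
  then have "b \<le> N0"
    using ab by linarith
  then have "d * b \<le> m"
    using mult_left_mono[of b N0 d] d by linarith
  have "0 < d * b"
    using d b n0 by simp
  have "S 1 = 1"
    using S unfolding submultiplicative_on_def by auto
  have "1 \<le> S n0"
    using submultiplicative_on_ge_one[OF S] n0 by simp
  have Tb: "?T b = S n0 + d * (b - n0)"
    using b by (simp add: affine_extension_ge)
  moreover have "0 < d * (b - n0)"
    using d b by simp
  ultimately have "1 \<le> ?T b"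
    using \<open>1 \<le> S n0\<close> by linarith
  have growth: "d * b * (a - 1) \<le> ?T a - 1"
  proof (cases "a \<le> n0")
    case True
    have "d * b * (a - 1) \<le> m * (a - 1)"
      using \<open>d * b \<le> m\<close> a by (intro mult_right_mono) auto
    also have "\<dots> \<le> ?T a - 1"
      using slope[of 1 a] True a \<open>S 1 = 1\<close> by simp
    finally show ?thesis .
  next
    case False
    have "d * (a * b) - d * b * (a - 1) = d * b"
      by (simp add: algebra_simps)
    then have "d * b * (a - 1) \<le> d * (a * b)"
      using \<open>0 < d * b\<close> by linarith
    also have "\<dots> \<le> m"
      using d mult_left_mono[OF ab, of d] by linarith
    also have "\<dots> \<le> m * (n0 - 1)"
      using \<open>0 < d * b\<close> \<open>d * b \<le> m\<close> n0 mult_left_mono[of 1 "n0 - 1" m] by simp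
    also have "\<dots> \<le> S n0 - 1"
      using slope[of 1 n0] n0 \<open>S 1 = 1\<close> by simp
    also have "\<dots> \<le> ?T a - 1"
      using False d by (simp add: affine_extension_ge)
    finally show ?thesis .
  qed
  have "0 \<le> ?T a - 1"
    using growth \<open>0 < d * b\<close> a by (smt (verit) mult_nonneg_nonneg)
  have "?T (a * b) = ?T b + d * b * (a - 1)"
    using Tb \<open>b \<le> a * b\<close> b by (simp add: affine_extension_ge algebra_simps)
  also have "\<dots> \<le> ?T b + (?T a - 1) * ?T b"
    using growth mult_left_mono[OF \<open>1 \<le> ?T b\<close> \<open>0 \<le> ?T a - 1\<close>] by simp
  also have "\<dots> = ?T a * ?T b"
    by (simp add: algebra_simps)
  finally show ?thesis .
qed

lemma submultiplicative_on_affine_extension: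
  assumes S: "submultiplicative_on n0 S" and n0: "2 \<le> n0" "n0 \<le> N0"
    and slope: "\<And>x y. 1 \<le> x \<Longrightarrow> x \<le> y \<Longrightarrow> y \<le> n0 \<Longrightarrow> m * (y - x) \<le> S y - S x"
    and d: "0 < d" "d * N0 \<le> m"
  shows "submultiplicative_on N0 (affine_extension n0 d S)"
proof -
  let ?T = "affine_extension n0 d S"
  have S_props: "piecewise_linear_on 1 n0 S" "continuous_on {1..n0} S" "strict_mono_on {1..n0} S"
    "concave_on {1..n0} S" "\<forall>x\<in>{1..2}. S x = x"
    using S unfolding submultiplicative_on_def by auto
  have "d \<le> d * N0"
    using d n0 by simp
  then have "d \<le> m" "0 \<le> m"
    using d by linarith+
  have "?T (x * y) \<le> ?T x * ?T y" if x: "1 \<le> x" and y: "1 \<le> y" and xy: "x * y \<le> N0" for x y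
  proof -
    have "x \<le> x * y" "y \<le> x * y"
      using x y by (simp_all add: mult_le_cancel_left1 mult_le_cancel_right1)
    consider "x * y \<le> n0" | "n0 < y" | "n0 < x" | "x \<le> n0" "y \<le> n0" "n0 < x * y"
      by linarith
    then show ?thesis
    proof cases
      case 1
      then have "x \<le> n0" "y \<le> n0"
        using \<open>x \<le> x * y\<close> \<open>y \<le> x * y\<close> by linarith+
      then show ?thesis
        using 1 S x y unfolding submultiplicative_on_def by simp
    next
      case 2
      then show ?thesis
        using affine_extension_mult_le_large_factor[OF S n0(1) slope d x _ xy] by simp
    next
      case 3
      then show ?thesis
        using affine_extension_mult_le_large_factor[OF S n0(1) slope d y _, of x] xy
        by (simp add: mult.commute)
    next
      case 4
      have "d * y \<le> m"
        using 4 n0 d mult_left_mono[of y N0 d] by linarith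
      moreover have "0 \<le> x - n0 / y"
        using 4 y by (simp add: field_simps)
      ultimately have "d * y * (x - n0 / y) \<le> m * (x - n0 / y)"
        by (rule mult_right_mono)
      moreover have "?T (x * y) = S n0 + d * y * (x - n0 / y)"
        using 4 y by (simp add: affine_extension_ge field_simps)
      ultimately have "?T (x * y) \<le> S n0 + m * (x - n0 / y)"
        by simp
      also have "\<dots> \<le> S x * S y"
        using submultiplicative_on_mult_ge_endpoint[OF S \<open>0 \<le> m\<close> slope x _ y] 4 by simp
      finally show ?thesis
        using 4 by simp
    qed
  qed
  moreover have "concave_on {1..N0} ?T"
    using slope \<open>d \<le> m\<close> by (intro concave_on_affine_extension S_props(4))
      (smt (verit) mult_right_mono)
  ultimately show ?thesis
    unfolding submultiplicative_on_def using S_props n0 d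
    by (auto intro: piecewise_linear_on_affine_extension continuous_on_affine_extension
        strict_mono_on_affine_extension)
qed

theorem lemma2p3:
  fixes n0 :: real and S :: "real \<Rightarrow> real"
  assumes "2 \<le> n0"
    and "submultiplicative_on n0 S"
  shows "\<forall>\<epsilon>>0. \<forall>N0>n0. \<exists>T :: real \<Rightarrow> real.
           (\<forall>x\<in>{1..n0}. T x = S x) \<and>
           submultiplicative_on N0 T \<and>
           T N0 < S n0 + \<epsilon>"
proof (intro allI impI)
  fix \<epsilon> N0 :: real
  assume "0 < \<epsilon>" "n0 < N0"
  obtain m where "0 < m" and slope: "\<And>x y. 1 \<le> x \<Longrightarrow> x \<le> y \<Longrightarrow> y \<le> n0 \<Longrightarrow> m * (y - x) \<le> S y - S x"
    using submultiplicative_on_slope_bound[OF assms(2)] assms(1) by auto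
  define u where "u = min (m / N0) (\<epsilon> / (N0 - n0))"
  define d where "d = u / 2"
  have "0 < N0" "0 < N0 - n0"
    using assms(1) \<open>n0 < N0\<close> by auto
  moreover have "0 < u" "u \<le> m / N0" "u \<le> \<epsilon> / (N0 - n0)"
    using \<open>0 < m\<close> \<open>0 < \<epsilon>\<close> \<open>0 < N0\<close> \<open>0 < N0 - n0\<close> by (auto simp: u_def)
  then have "0 < d" "d \<le> m / N0" "d < \<epsilon> / (N0 - n0)"
    unfolding d_def by linarith+
  ultimately have "d * N0 \<le> m" "d * (N0 - n0) < \<epsilon>"
    by (simp_all add: pos_le_divide_eq pos_less_divide_eq)
  let ?T = "affine_extension n0 d S"
  have "submultiplicative_on N0 ?T"
    using assms \<open>n0 < N0\<close> slope \<open>0 < d\<close> \<open>d * N0 \<le> m\<close>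
    by (intro submultiplicative_on_affine_extension) auto
  moreover have "?T N0 < S n0 + \<epsilon>"
    using \<open>n0 < N0\<close> \<open>d * (N0 - n0) < \<epsilon>\<close> by (simp add: affine_extension_ge)
  ultimately show "\<exists>T. (\<forall>x\<in>{1..n0}. T x = S x) \<and> submultiplicative_on N0 T \<and> T N0 < S n0 + \<epsilon>"
    by (intro exI[of _ ?T]) simp
qed

end
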